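(* Let $f_1,\dots,f_n$ satisfy Assumption A1 and let $f_0:\mathbb{R}^d\to\mathbb{R}$ be smooth. If $x\in\mathrm{Pareto}(F)$ is such that $\{\nabla f_1(x),\dots,\nabla f_n(x)\}$ is Pareto generic and $x$ is weakly preference stationary, then $x$ is preference stationary.
   Context: Assumption A1: each $f_i:\mathbb{R}^d\to\mathbb{R}$ is twice differentiable with $\mu\mathbf{I}\preceq\nabla^2 f_i\preceq L\mathbf{I}$, $0<\mu\le L$. $F=(f_1,\dots,f_n)$, $\nabla F(x)\in\mathbb{R}^{n\times d}$ its Jacobian, $\Delta^{n-1}$ the simplex, $f_\beta=\sum_i\beta_if_i$, $x^*(\beta)=x_\beta=\operatorname{argmin}_xf_\beta(x)$ with $\nabla x^*(\beta)=-\nabla^2f_\beta(x_\beta)^{-1}\nabla F(x_\beta)^\top$. $\mathrm{Pareto}(F)$ is the set of Pareto optimal points (equivalently $x$ with $\nabla f_\beta(x)=0$ for some $\beta\in\Delta^{n-1}$). Let $\Delta^{n-1}(x):=\{\beta\in\Delta^{n-1}:\nabla f_\beta(x)=0\}$. A point $x\in\mathrm{Pareto}(F)$ is weakly preference stationary if there exists $\beta\in\Delta^{n-1}(x)$ with $-\nabla(f_0\circ x^* )(\beta)^\top(\beta'-\beta)\le0$ for all $\beta'\in\Delta^{n-1}$; it is preference stationary if this holds for all $\beta\in\Delta^{n-1}(x)$. A set $\{v_1,\dots,v_n\}\subset\mathbb{R}^d$ is Pareto generic if $\beta_1v_1+\dots+\beta_nv_n=0$ for some $\beta\in\Delta^{n-1}$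 and $\mathrm{rank}(v_1,\dots,v_n)=n-1$. *)

theory Defs
  imports "HOL-Analysis.Analysis"
begin

definition grad :: "(real^'d \<Rightarrow> real) \<Rightarrow> real^'d \<Rightarrow> real^'d" where
  "grad g x = (THE v. (g has_derivative (\<lambda>h. v \<bullet> h)) (at x))"

definition hess :: "(real^'d \<Rightarrow> real) \<Rightarrow> real^'d \<Rightarrow> real^'d^'d" where
  "hess g x = (THE H. (grad g has_derivative (\<lambda>h. H *v h)) (at x))"

definition A1 :: "('n::finite \<Rightarrow> real^'d \<Rightarrow> real) \<Rightarrow> real \<Rightarrow> real \<Rightarrow> bool" where
  "A1 f \<mu> L \<longleftrightarrow> 0 < \<mu> \<and> \<mu> \<le> L \<and>
     (\<forall>i. \<exists>g H. \<forall>x. (f i has_derivative (\<lambda>h. g x \<bullet> h)) (at x)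
              \<and> (g has_derivative (\<lambda>h. H x *v h)) (at x)
              \<and> (\<forall>v. \<mu> * (v \<bullet> v) \<le> v \<bullet> (H x *v v) \<and> v \<bullet> (H x *v v) \<le> L * (v \<bullet> v)))"

coinductive smooth :: "(real^'d \<Rightarrow> real) \<Rightarrow> bool" where
  "continuous_on UNIV g \<Longrightarrow>
   (\<forall>j. \<exists>h. (\<forall>x. ((\<lambda>t. g (x + t *\<^sub>R axis j 1)) has_real_derivative h x) (at 0)) \<and> smooth h)
   \<Longrightarrow> smooth g"

definition std_simplex :: "(real^'n) set" where
  "std_simplex = {\<beta>. (\<forall>i. 0 \<le> \<beta> $ i) \<and> (\<Sum>i\<in>UNIV. \<beta> $ i) = 1}"

definition fbeta :: "('n::finite \<Rightarrow> real^'d \<Rightarrow> real) \<Rightarrow> real^'n \<Rightarrow> real^'d \<Rightarrow> real" where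
  "fbeta f \<beta> x = (\<Sum>i\<in>UNIV. \<beta> $ i * f i x)"

definition xstar :: "('n::finite \<Rightarrow> real^'d \<Rightarrow> real) \<Rightarrow> real^'n \<Rightarrow> real^'d" where
  "xstar f \<beta> = (THE x. \<forall>y. fbeta f \<beta> x \<le> fbeta f \<beta> y)"

definition jac :: "('n::finite \<Rightarrow> real^'d \<Rightarrow> real) \<Rightarrow> real^'d \<Rightarrow> real^'d^'n" where
  "jac f x = (\<chi> i. grad (f i) x)"

text \<open>Gradient of f_0 o x^* at beta, via the chain rule and
  grad x^*(beta) = - (hess f_beta (x_beta))^{-1} (grad F (x_beta))^T.\<close>
definition pref_grad :: "(real^'d \<Rightarrow> real) \<Rightarrow> ('n::finite \<Rightarrow> real^'d \<Rightarrow> real) \<Rightarrow> real^'n \<Rightarrow> real^'n" where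
  "pref_grad f0 f \<beta> =
     (let x\<beta> = xstar f \<beta>;
          Dx = - (matrix_inv (hess (fbeta f \<beta>) x\<beta>) ** transpose (jac f x\<beta>))
      in transpose Dx *v grad f0 x\<beta>)"

definition pareto :: "('n::finite \<Rightarrow> real^'d \<Rightarrow> real) \<Rightarrow> (real^'d) set" where
  "pareto f = {x. \<not> (\<exists>y. (\<forall>i. f i y \<le> f i x) \<and> (\<exists>i. f i y < f i x))}"

definition simplex_at :: "('n::finite \<Rightarrow> real^'d \<Rightarrow> real) \<Rightarrow> real^'d \<Rightarrow> (real^'n) set" where
  "simplex_at f x = {\<beta>\<in>std_simplex. grad (fbeta f \<beta>) x = 0}"

definition stat_at :: "(real^'d \<Rightarrow> real) \<Rightarrow> ('n::finite \<Rightarrow> real^'d \<Rightarrow> real) \<Rightarrow> real^'n \<Rightarrow> bool" where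
  "stat_at f0 f \<beta> \<longleftrightarrow> (\<forall>\<beta>'\<in>std_simplex. - (pref_grad f0 f \<beta> \<bullet> (\<beta>' - \<beta>)) \<le> 0)"

definition weakly_pref_stationary :: "(real^'d \<Rightarrow> real) \<Rightarrow> ('n::finite \<Rightarrow> real^'d \<Rightarrow> real) \<Rightarrow> real^'d \<Rightarrow> bool" where
  "weakly_pref_stationary f0 f x \<longleftrightarrow> x \<in> pareto f \<and> (\<exists>\<beta>\<in>simplex_at f x. stat_at f0 f \<beta>)"

definition pref_stationary :: "(real^'d \<Rightarrow> real) \<Rightarrow> ('n::finite \<Rightarrow> real^'d \<Rightarrow> real) \<Rightarrow> real^'d \<Rightarrow> bool" where
  "pref_stationary f0 f x \<longleftrightarrow> x \<in> pareto f \<and> (\<forall>\<beta>\<in>simplex_at f x. stat_at f0 f \<beta>)"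

definition pareto_generic :: "real^'d^'n \<Rightarrow> bool" where
  "pareto_generic V \<longleftrightarrow> (\<exists>\<beta>\<in>std_simplex. (\<Sum>i\<in>UNIV. \<beta> $ i *\<^sub>R V $ i) = 0)
                         \<and> rank V = CARD('n) - 1"

end

theory Submission
  imports Defs
begin

(* The weights beta with grad f_beta(x) = 0 are exactly the simplex points in the null space of
   the transposed Jacobian.  Pareto genericity gives that matrix rank n - 1, so by rank-nullity the
   null space is a line, and a line meets the hyperplane sum beta_i = 1 at most once.  Hence the
   beta in the definition of weak preference stationarity is the only one, and the two notions
   agree. *)

lemma dim_range_plus_dim_kernel:
  fixes f :: "'a::euclidean_space \<Rightarrow> 'b::real_vector"
  assumes "linear f"
  shows "dim (range f) + dim {x. f x = 0} = DIM('a)"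
proof -
  define K where "K = {x. f x = 0}"
  define W where "W = {y. \<forall>x\<in>K. orthogonal x y}"
  have "subspace K"
    unfolding K_def using assms by (rule linear_subspace_kernel)
  have "subspace W"
    unfolding W_def by (rule subspace_orthogonal_to_vectors)
  have "f ` W = range f"
  proof (intro subset_antisym subsetI)
    fix y assume "y \<in> range f"
    then obtain x where "y = f x" by blast
    obtain u v where "u \<in> span K" and v: "\<And>w. w \<in> span K \<Longrightarrow> orthogonal v w" and "x = u + v"
      using orthogonal_subspace_decomp_exists[of K x] by metis
    have "u \<in> K"
      using \<open>u \<in> span K\<close> \<open>subspace K\<close> span_eq_iff by blast
    then have "y = f v"
      using \<open>y = f x\<close> \<open>x = u + v\<close> assms by (simp add: K_def linear_add)
    moreover have "v \<in> W"
      unfolding W_def using v span_base orthogonal_commute by blast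
    ultimately show "y \<in> f ` W" by blast
  qed auto
  moreover have "inj_on f (span W)"
  proof (rule inj_onI)
    fix a b assume "a \<in> span W" "b \<in> span W" "f a = f b"
    moreover have "span W = W"
      using \<open>subspace W\<close> span_eq_iff by blast
    ultimately have "a - b \<in> K" and "a - b \<in> W"
      using assms \<open>subspace W\<close> by (simp_all add: K_def linear_diff subspace_diff)
    then have "orthogonal (a - b) (a - b)"
      unfolding W_def by blast
    then show "a = b" by (simp add: orthogonal_def)
  qed
  ultimately have "dim (range f) = dim W"
    using dim_image_eq[OF assms] by metis
  moreover have "dim W + dim K = DIM('a)"
    using dim_subspace_orthogonal_to_vectors[OF \<open>subspace K\<close> subspace_UNIV] by (simp add: W_def)
  ultimately show ?thesis by (simp add: K_def)
qed

lemma rank_plus_dim_null_space: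
  fixes A :: "real^'n^'m"
  shows "rank A + dim {x. A *v x = 0} = CARD('n)"
  using dim_range_plus_dim_kernel[OF matrix_vector_mul_linear[of A]] by (simp add: rank_dim_range)

lemma subspace_dim_le_1_level_set_unique:
  fixes K :: "'a::euclidean_space set" and l :: "'a \<Rightarrow> real"
  assumes "subspace K" "dim K \<le> 1" "linear l"
    and "a \<in> K" "l a = 1" "b \<in> K" "l b = 1"
  shows "a = b"
proof -
  have "a \<noteq> 0"
    using \<open>l a = 1\<close> \<open>linear l\<close> linear_0 by force
  have "span {a} = K"
    using \<open>a \<noteq> 0\<close> assms(1,2,4) by (intro subspace_dim_equal) (auto simp: span_minimal)
  then obtain c where "b = c *\<^sub>R a"
    using \<open>b \<in> K\<close> span_singleton by blast
  then have "c = 1"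
    using \<open>l a = 1\<close> \<open>l b = 1\<close> \<open>linear l\<close> by (simp add: linear_scale)
  then show ?thesis
    using \<open>b = c *\<^sub>R a\<close> by simp
qed

lemma grad_eqI:
  assumes "(g has_derivative (\<lambda>h. v \<bullet> h)) (at x)"
  shows "grad g x = v"
  unfolding grad_def
proof (rule the_equality)
  fix w assume "(g has_derivative (\<lambda>h. w \<bullet> h)) (at x)"
  then have "(\<lambda>h. w \<bullet> h) = (\<lambda>h. v \<bullet> h)"
    using assms by (rule has_derivative_unique)
  then have "(w - v) \<bullet> (w - v) = 0"
    by (metis inner_diff_left right_minus_eq)
  then show "w = v" by simp
qed (rule assms)

lemma A1_has_derivative_grad:
  fixes f :: "'n::finite \<Rightarrow> real^'d::finite \<Rightarrow> real"
  assumes "A1 f \<mu> L"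
  shows "(f i has_derivative (\<lambda>h. grad (f i) x \<bullet> h)) (at x)"
proof -
  obtain g where "\<And>y. (f i has_derivative (\<lambda>h. g y \<bullet> h)) (at y)"
    using assms unfolding A1_def by metis
  then show ?thesis
    using grad_eqI by metis
qed

lemma grad_fbeta:
  fixes f :: "'n::finite \<Rightarrow> real^'d::finite \<Rightarrow> real"
  assumes "\<And>i. (f i has_derivative (\<lambda>h. grad (f i) x \<bullet> h)) (at x)"
  shows "grad (fbeta f \<beta>) x = transpose (jac f x) *v \<beta>"
proof (rule grad_eqI)
  have "((\<lambda>y. \<Sum>i\<in>UNIV. \<beta> $ i * f i y) has_derivative
         (\<lambda>h. \<Sum>i\<in>UNIV. \<beta> $ i * (grad (f i) x \<bullet> h))) (at x)"
    by (intro has_derivative_sum has_derivative_mult_right assms)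
  moreover have "transpose (jac f x) *v \<beta> = (\<Sum>i\<in>UNIV. \<beta> $ i *\<^sub>R grad (f i) x)"
    by (simp add: jac_def vec_eq_iff matrix_vector_mult_def transpose_def sum_component mult.commute)
  ultimately show "(fbeta f \<beta> has_derivative (\<lambda>h. (transpose (jac f x) *v \<beta>) \<bullet> h)) (at x)"
    by (simp add: fbeta_def[abs_def] inner_sum_left)
qed

lemma simplex_at_eq_null_space:
  fixes f :: "'n::finite \<Rightarrow> real^'d::finite \<Rightarrow> real"
  assumes "\<And>i. (f i has_derivative (\<lambda>h. grad (f i) x \<bullet> h)) (at x)"
  shows "simplex_at f x = std_simplex \<inter> {\<beta>. transpose (jac f x) *v \<beta> = 0}"
  using grad_fbeta[of f x] assms by (auto simp: simplex_at_def)

lemma pareto_generic_dim_null_space_transpose: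
  fixes V :: "real^'d^'n"
  assumes "pareto_generic V"
  shows "dim {\<beta>. transpose V *v \<beta> = 0} = 1"
proof -
  have "rank (transpose V) = CARD('n) - 1"
    using assms by (simp add: pareto_generic_def rank_transpose)
  moreover have "CARD('n) > 0" by simp
  ultimately show ?thesis
    using rank_plus_dim_null_space[of "transpose V"] by linarith
qed

lemma pareto_generic_simplex_at_unique:
  fixes f :: "'n::finite \<Rightarrow> real^'d::finite \<Rightarrow> real"
  assumes "\<And>i. (f i has_derivative (\<lambda>h. grad (f i) x \<bullet> h)) (at x)"
    and "pareto_generic (jac f x)"
    and "\<beta> \<in> simplex_at f x" "\<beta>' \<in> simplex_at f x"
  shows "\<beta> = \<beta>'"
proof (rule subspace_dim_le_1_level_set_unique)
  show "subspace {\<beta>. transpose (jac f x) *v \<beta> = 0}"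
    by (rule linear_subspace_kernel[OF matrix_vector_mul_linear])
  show "dim {\<beta>. transpose (jac f x) *v \<beta> = 0} \<le> 1"
    using pareto_generic_dim_null_space_transpose[OF assms(2)] by simp
  show "linear (\<lambda>\<beta>::real^'n. \<Sum>i\<in>UNIV. \<beta> $ i)"
    by (rule linearI) (simp_all add: sum.distrib sum_distrib_left)
qed (use assms(3,4) simplex_at_eq_null_space[of f x] assms(1) in \<open>auto simp: std_simplex_def\<close>)

theorem proposition6:
  fixes f :: "'n::finite \<Rightarrow> real^'d::finite \<Rightarrow> real"
    and f0 :: "real^'d \<Rightarrow> real"
    and \<mu> L :: real
    and x :: "real^'d"
  assumes "A1 f \<mu> L"
    and "smooth f0"
    and "x \<in> pareto f"
    and "pareto_generic (\<chi> i. grad (f i) x)"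
    and "weakly_pref_stationary f0 f x"
  shows "pref_stationary f0 f x"
proof -
  obtain \<beta>\<^sub>0 where "\<beta>\<^sub>0 \<in> simplex_at f x" and "stat_at f0 f \<beta>\<^sub>0"
    using assms(5) unfolding weakly_pref_stationary_def by blast
  moreover have "\<beta> = \<beta>\<^sub>0" if "\<beta> \<in> simplex_at f x" for \<beta>
    using pareto_generic_simplex_at_unique A1_has_derivative_grad[OF assms(1)] assms(4)
      that \<open>\<beta>\<^sub>0 \<in> simplex_at f x\<close> unfolding jac_def by metis
  ultimately show ?thesis
    using assms(3) unfolding pref_stationary_def by blast
qed

end
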